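(* Let $n$ and $t$ be positive integers and $d=2t+1$. If $t\leqslant n-\sqrt{n}-1$, $n\cdot\prod_{i=0}^{t}(n-i)\leqslant d\cdot d!$, and $d\leqslant n-1$, then $A_{new}(n,d)\leqslant A_{SP}(n,d)$.
   Context: $S_n$ is the symmetric group on $[n]$; the characteristic set of $\pi\in S_n$ is $A(\pi)=\{(\pi(i),\pi(i+1)):1\leqslant i<n\}$, and the block permutation distance is $d_B(\pi_1,\pi_2)=|A(\pi_1)\setminus A(\pi_2)|$. The $t$-block permutation ball $b_B(n,t)$ is the set of $\sigma\in S_n$ with $d_B(\sigma,\mathrm{id})\leqslant t$. The sphere-packing bound is $A_{SP}(n,2t+1)=\frac{n!}{|b_B(n,t)|}$, and the new bound is $A_{new}(n,d)=\frac{\binom{n}{d}\binom{n}{d}(n-d)!}{\binom{n-1}{n-d}}$. *)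

theory Defs
  imports "HOL-Combinatorics.Permutations" Complex_Main
begin

text \<open>Permutations of [n] = {1..n} are functions nat => nat with \<open>\<sigma> permutes {1..n}\<close>.\<close>

definition char_set :: "nat \<Rightarrow> (nat \<Rightarrow> nat) \<Rightarrow> (nat \<times> nat) set" where
  "char_set n \<pi> = {(\<pi> i, \<pi> (i + 1)) | i. 1 \<le> i \<and> i < n}"

definition block_dist :: "nat \<Rightarrow> (nat \<Rightarrow> nat) \<Rightarrow> (nat \<Rightarrow> nat) \<Rightarrow> nat" where
  "block_dist n \<pi>1 \<pi>2 = card (char_set n \<pi>1 - char_set n \<pi>2)"

definition block_ball :: "nat \<Rightarrow> nat \<Rightarrow> (nat \<Rightarrow> nat) set" where
  "block_ball n t = {\<sigma>. \<sigma> permutes {1..n} \<and> block_dist n \<sigma> id \<le> t}"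

text \<open>Sphere-packing bound A_SP(n, 2t+1) = n! / |b_B(n,t)|.\<close>
definition A_SP :: "nat \<Rightarrow> nat \<Rightarrow> real" where
  "A_SP n t = fact n / real (card (block_ball n t))"

definition A_new :: "nat \<Rightarrow> nat \<Rightarrow> real" where
  "A_new n d = real (n choose d) * real (n choose d) * fact (n - d) / real ((n - 1) choose (n - d))"

end

theory Submission imports Defs begin

text \<open>A permutation at block distance at most t from the identity has at most t breakpoints, so
  its values are determined by a list of t + 1 block starts Q containing 1 and every position
  following a breakpoint. Listing the images of the block starts in increasing order of position
  loses no information: each block is a run of consecutive values, so the next block starts exactly
  where the next larger listed value (or n + 1) says. Hence the ball injects into the
  n (n - 1) \<dots> (n - t) lists of t + 1 distinct elements of [n]. The theorem follows because
  A_new n d simplifies to n \<cdot> n! / (d \<cdot> d!).\<close>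

definition breakpoints :: "nat \<Rightarrow> (nat \<Rightarrow> nat) \<Rightarrow> nat set" where
  "breakpoints n \<sigma> = {i. 1 \<le> i \<and> i < n \<and> \<sigma> (Suc i) \<noteq> Suc (\<sigma> i)}"

definition covers_breakpoints :: "nat \<Rightarrow> (nat \<Rightarrow> nat) \<Rightarrow> nat set \<Rightarrow> bool" where
  "covers_breakpoints n \<sigma> Q \<longleftrightarrow> Q \<subseteq> {1..n} \<and> 1 \<in> Q \<and> Suc ` breakpoints n \<sigma> \<subseteq> Q"

definition next_value :: "nat \<Rightarrow> nat set \<Rightarrow> nat \<Rightarrow> nat" where
  "next_value n V v = Min {w \<in> insert (Suc n) V. v < w}"

definition block_values :: "(nat \<Rightarrow> nat) \<Rightarrow> nat set \<Rightarrow> nat list" where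
  "block_values \<sigma> Q = map \<sigma> (sorted_list_of_set Q)"

lemma block_dist_id_eq_card_breakpoints:
  assumes "\<sigma> permutes {1..n}"
  shows "block_dist n \<sigma> id = card (breakpoints n \<sigma>)"
proof -
  have img: "\<sigma> ` {1..n} = {1..n}" and inj: "inj_on \<sigma> {1..n}"
    using assms by (auto simp: permutes_image permutes_inj_on)
  define pair where "pair i = (\<sigma> i, \<sigma> (Suc i))" for i
  have "char_set n \<sigma> - char_set n id = pair ` breakpoints n \<sigma>"
  proof (intro equalityI subsetI)
    fix x assume x: "x \<in> char_set n \<sigma> - char_set n id"
    then obtain i where i: "x = pair i" "1 \<le> i" "i < n"
      unfolding char_set_def pair_def by auto
    have "\<sigma> i \<in> {1..n}" "\<sigma> (Suc i) \<in> {1..n}" using i img by auto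
    have "\<sigma> (Suc i) \<noteq> Suc (\<sigma> i)"
    proof
      assume "\<sigma> (Suc i) = Suc (\<sigma> i)"
      then have "x = (\<sigma> i, \<sigma> i + 1)" "1 \<le> \<sigma> i" "\<sigma> i < n"
        using i \<open>\<sigma> i \<in> {1..n}\<close> \<open>\<sigma> (Suc i) \<in> {1..n}\<close> unfolding pair_def by auto
      then have "x \<in> char_set n id" unfolding char_set_def by auto
      then show False using x by simp
    qed
    then show "x \<in> pair ` breakpoints n \<sigma>" using i unfolding breakpoints_def by auto
  qed (auto simp: breakpoints_def char_set_def pair_def)
  moreover have "inj_on pair (breakpoints n \<sigma>)"
    by (rule inj_onI) (auto simp: pair_def breakpoints_def intro: inj_onD[OF inj])
  ultimately show ?thesis unfolding block_dist_def by (simp add: card_image)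
qed

lemma exists_covers_breakpoints:
  assumes "card (breakpoints n \<sigma>) \<le> t" "t < n"
  shows "\<exists>Q. covers_breakpoints n \<sigma> Q \<and> card Q = Suc t"
proof -
  define Q0 where "Q0 = insert 1 (Suc ` breakpoints n \<sigma>)"
  have fin: "finite (breakpoints n \<sigma>)" unfolding breakpoints_def by auto
  have "card Q0 \<le> Suc (card (Suc ` breakpoints n \<sigma>))"
    unfolding Q0_def using fin by (simp add: card_insert_le_m1)
  also have "\<dots> \<le> Suc t" using assms(1) card_image_le[OF fin, of Suc] by simp
  finally have "card Q0 \<le> Suc t" .
  moreover have "Q0 \<subseteq> {1..n}" using assms(2) unfolding Q0_def breakpoints_def by auto
  ultimately obtain Q where "Q0 \<subseteq> Q" "Q \<subseteq> {1..n}" "card Q = Suc t"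
    using exists_subset_between[of Q0 "Suc t" "{1..n}"] assms(2) by auto
  then show ?thesis unfolding covers_breakpoints_def Q0_def by auto
qed

lemma finite_covers_breakpoints: "covers_breakpoints n \<sigma> Q \<Longrightarrow> finite Q"
  unfolding covers_breakpoints_def by (meson finite_atLeastAtMost finite_subset)

lemma covers_breakpoints_shift:
  assumes "covers_breakpoints n \<sigma> Q" "1 \<le> a" "a + m \<le> n"
    and "\<And>c. a < c \<Longrightarrow> c \<le> a + m \<Longrightarrow> c \<notin> Q"
  shows "\<sigma> (a + m) = \<sigma> a + m"
  using assms(3,4)
proof (induction m)
  case (Suc m)
  have "Suc (a + m) \<notin> Q" using Suc.prems(2) by simp
  then have "a + m \<notin> breakpoints n \<sigma>" using assms(1) unfolding covers_breakpoints_def by auto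
  then have "\<sigma> (Suc (a + m)) = Suc (\<sigma> (a + m))"
    using assms(2) Suc.prems(1) unfolding breakpoints_def by auto
  then show ?case using Suc by simp
qed simp

text \<open>The next block start is read off the values alone; n + 1 is the sentinel for a block
  ending in the largest value n.\<close>

lemma next_block_start:
  assumes perm: "\<sigma> permutes {1..n}" and cov: "covers_breakpoints n \<sigma> Q"
    and "a \<in> Q" "b \<in> Q" "a < b" and gap: "\<And>c. a < c \<Longrightarrow> c < b \<Longrightarrow> c \<notin> Q"
  shows "b = a + (next_value n (\<sigma> ` Q) (\<sigma> a) - \<sigma> a)"
proof -
  have Q: "Q \<subseteq> {1..n}" "1 \<in> Q" using cov unfolding covers_breakpoints_def by auto
  have img: "\<sigma> ` {1..n} = {1..n}" and inj: "inj_on \<sigma> {1..n}"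
    using perm by (auto simp: permutes_image permutes_inj_on)
  have a1: "1 \<le> a" and bn: "b \<le> n" using assms(3,4) Q by auto
  have shift: "\<sigma> (a + m) = \<sigma> a + m" if "a + m < b" for m
    using covers_breakpoints_shift[OF cov a1, of m] that bn gap by auto
  define w where "w = \<sigma> a + (b - a)"
  have last: "\<sigma> (b - 1) = w - 1" using shift[of "b - 1 - a"] \<open>a < b\<close> unfolding w_def by simp
  have "b - 1 \<in> {1..n}" using a1 \<open>a < b\<close> bn by auto
  then have "\<sigma> (b - 1) \<in> {1..n}" using img by blast
  then have w_le: "w \<le> Suc n" using last \<open>a < b\<close> unfolding w_def by auto
  define M where "M = {w' \<in> insert (Suc n) (\<sigma> ` Q). \<sigma> a < w'}"
  have "w \<in> M"
  proof (cases "w = Suc n")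
    case False
    with w_le last \<open>\<sigma> (b - 1) \<in> {1..n}\<close> have "w \<in> {1..n}" by auto
    then obtain p where p: "p \<in> {1..n}" "\<sigma> p = w" using img by (metis imageE)
    have "p \<in> Q"
    proof (rule ccontr)
      assume pQ: "p \<notin> Q"
      moreover have "p \<noteq> 1" using pQ Q by auto
      ultimately have p': "p = Suc (p - 1)" "1 \<le> p - 1" using p by auto
      then have "p - 1 \<notin> breakpoints n \<sigma>" using pQ cov unfolding covers_breakpoints_def by force
      then have "\<sigma> (p - 1) = \<sigma> (b - 1)" using p p' last unfolding breakpoints_def by auto
      then have "p - 1 = b - 1" using inj p p' \<open>b - 1 \<in> {1..n}\<close> by (auto dest: inj_onD)
      then show False using pQ \<open>b \<in> Q\<close> p' \<open>a < b\<close> by simp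
    qed
    moreover have "\<sigma> a < w" using \<open>a < b\<close> unfolding w_def by simp
    ultimately show ?thesis using p unfolding M_def by auto
  qed (use \<open>a < b\<close> in \<open>auto simp: M_def w_def\<close>)
  moreover have "w \<le> w'" if "w' \<in> M" for w'
  proof (rule ccontr)
    assume "\<not> w \<le> w'"
    with that w_le obtain q where q: "q \<in> Q" "w' = \<sigma> q" "\<sigma> a < w'" "w' < w"
      unfolding M_def by auto
    define m where "m = w' - \<sigma> a"
    have m: "0 < m" "a + m < b" using q unfolding m_def w_def by auto
    have "\<sigma> (a + m) = \<sigma> a + m" using shift[OF m(2)] .
    also have "\<dots> = \<sigma> q" using q unfolding m_def by simp
    finally have "\<sigma> (a + m) = \<sigma> q" .
    then have "a + m = q" using inj m a1 bn q Q by (auto dest: inj_onD)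
    then show False using gap[of "a + m"] m q by auto
  qed
  moreover have "finite M" using finite_subset[OF Q(1)] unfolding M_def by simp
  ultimately have "next_value n (\<sigma> ` Q) (\<sigma> a) = w"
    unfolding next_value_def M_def[symmetric] by (intro Min_eqI) auto
  then show ?thesis using \<open>a < b\<close> unfolding w_def by simp
qed

lemma sorted_list_of_set_consecutive:
  assumes "finite Q" "Suc k < card Q"
  shows "sorted_list_of_set Q ! k < sorted_list_of_set Q ! Suc k"
    and "\<And>c. sorted_list_of_set Q ! k < c \<Longrightarrow> c < sorted_list_of_set Q ! Suc k \<Longrightarrow> c \<notin> Q"
proof -
  let ?qs = "sorted_list_of_set Q"
  have len: "length ?qs = card Q" and set: "set ?qs = Q" using assms(1) by auto
  have lt: "?qs ! i < ?qs ! j" if "i < j" "j < card Q" for i j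
    using that len sorted_wrt_iff_nth_less[of "(<)" ?qs] by auto
  show "?qs ! k < ?qs ! Suc k" using lt assms(2) by simp
  fix c assume c: "?qs ! k < c" "c < ?qs ! Suc k"
  show "c \<notin> Q"
  proof
    assume "c \<in> Q"
    then obtain j where j: "j < card Q" "c = ?qs ! j" using set len by (metis in_set_conv_nth)
    show False
    proof (cases "j \<le> k")
      case True
      then show False using lt[of j k] c j assms(2) by (cases "j = k") auto
    next
      case False
      then show False using lt[of "Suc k" j] c j by (cases "j = Suc k") auto
    qed
  qed
qed

lemma sorted_list_of_set_nth_0_eq_1:
  fixes Q :: "nat set"
  assumes "Q \<subseteq> {1..n}" "1 \<in> Q"
  shows "sorted_list_of_set Q ! 0 = 1"
proof -
  have "finite Q" using finite_subset[OF assms(1)] by simp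
  moreover have "Min Q = 1" using assms \<open>finite Q\<close> by (intro Min_eqI) auto
  ultimately show ?thesis using assms(2) by (subst sorted_list_of_set_nonempty) auto
qed

lemma sorted_block_starts_Suc:
  assumes "\<sigma> permutes {1..n}" "covers_breakpoints n \<sigma> Q" "Suc k < card Q"
  defines "qs \<equiv> sorted_list_of_set Q"
  shows "qs ! Suc k = qs ! k + (next_value n (\<sigma> ` Q) (\<sigma> (qs ! k)) - \<sigma> (qs ! k))"
proof -
  have fin: "finite Q" using assms(2) by (rule finite_covers_breakpoints)
  then have "qs ! k \<in> Q" "qs ! Suc k \<in> Q"
    using assms(3) nth_mem[of _ qs] unfolding qs_def by auto
  then show ?thesis
    using next_block_start[OF assms(1,2)] sorted_list_of_set_consecutive[OF fin assms(3)]
    unfolding qs_def by blast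
qed

lemma block_values_determine_starts:
  assumes "\<sigma> permutes {1..n}" "covers_breakpoints n \<sigma> Q1"
    and "\<tau> permutes {1..n}" "covers_breakpoints n \<tau> Q2"
    and eq: "block_values \<sigma> Q1 = block_values \<tau> Q2"
  shows "Q1 = Q2"
proof -
  define q1 where "q1 = sorted_list_of_set Q1"
  define q2 where "q2 = sorted_list_of_set Q2"
  have fin: "finite Q1" "finite Q2"
    using assms(2,4) by (simp_all add: finite_covers_breakpoints)
  have "card Q1 = card Q2" using arg_cong[OF eq, of length] by (simp add: block_values_def)
  then have len: "length q1 = card Q1" "length q2 = card Q1" by (simp_all add: q1_def q2_def)
  have V: "\<sigma> ` Q1 = \<tau> ` Q2"
    using arg_cong[OF eq, of set] fin by (simp add: block_values_def)
  have "k < card Q1 \<longrightarrow> q1 ! k = q2 ! k" for k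
  proof (induction k)
    case 0
    show ?case using assms(2,4) sorted_list_of_set_nth_0_eq_1
      unfolding covers_breakpoints_def q1_def q2_def by metis
  next
    case (Suc k)
    have same_value: "\<sigma> (q1 ! k) = \<tau> (q2 ! k)" if "k < card Q1"
      using arg_cong[OF eq, of "\<lambda>L. L ! k"] that len
      by (simp add: block_values_def q1_def q2_def)
    show ?case
      using sorted_block_starts_Suc[OF assms(1,2), of k] sorted_block_starts_Suc[OF assms(3,4), of k]
        Suc same_value V \<open>card Q1 = card Q2\<close> unfolding q1_def q2_def by simp
  qed
  then have "q1 = q2" using len by (intro nth_equalityI) auto
  then show ?thesis
    using fin unfolding q1_def q2_def by (metis sorted_list_of_set.set_sorted_key_list_of_set)
qed

lemma permutes_eq_if_agree_on_cover:
  assumes "\<sigma> permutes {1..n}" "covers_breakpoints n \<sigma> Q"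
    and "\<tau> permutes {1..n}" "covers_breakpoints n \<tau> Q"
    and agree: "\<And>q. q \<in> Q \<Longrightarrow> \<sigma> q = \<tau> q"
  shows "\<sigma> = \<tau>"
proof
  fix i
  show "\<sigma> i = \<tau> i"
  proof (cases "i \<in> {1..n}")
    case True
    have Q: "Q \<subseteq> {1..n}" "1 \<in> Q" using assms(2) unfolding covers_breakpoints_def by auto
    define a where "a = Max {q \<in> Q. q \<le> i}"
    have fin: "finite {q \<in> Q. q \<le> i}" by simp
    have "1 \<in> {q \<in> Q. q \<le> i}" using Q True by auto
    then have "a \<in> {q \<in> Q. q \<le> i}" unfolding a_def using fin by (intro Max_in) auto
    then have "a \<in> Q" "a \<le> i" by auto
    moreover have "c \<notin> Q" if "a < c" "c \<le> i" for c
    proof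
      assume "c \<in> Q"
      then have "c \<le> a" unfolding a_def using fin that(2) by (intro Max_ge) auto
      then show False using that(1) by simp
    qed
    ultimately have a: "a \<in> Q" "a \<le> i" "\<And>c. a < c \<Longrightarrow> c \<le> i \<Longrightarrow> c \<notin> Q" by blast+
    have a1: "1 \<le> a" using a Q by auto
    have "a + (i - a) \<le> n" "\<And>c. a < c \<Longrightarrow> c \<le> a + (i - a) \<Longrightarrow> c \<notin> Q"
      using a True by auto
    then have "\<sigma> (a + (i - a)) = \<sigma> a + (i - a)" "\<tau> (a + (i - a)) = \<tau> a + (i - a)"
      using covers_breakpoints_shift[OF assms(2) a1] covers_breakpoints_shift[OF assms(4) a1]
      by blast+
    then show ?thesis using agree a by simp
  qed (use assms(1,3) in \<open>simp add: permutes_not_in\<close>)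
qed

lemma block_values_inj:
  assumes "\<sigma> permutes {1..n}" "covers_breakpoints n \<sigma> Q1"
    and "\<tau> permutes {1..n}" "covers_breakpoints n \<tau> Q2"
    and eq: "block_values \<sigma> Q1 = block_values \<tau> Q2"
  shows "\<sigma> = \<tau>"
proof -
  have Q: "Q1 = Q2" using block_values_determine_starts[OF assms] .
  have "finite Q1" using assms(2) by (rule finite_covers_breakpoints)
  then have "\<sigma> q = \<tau> q" if "q \<in> Q1" for q
    using that eq unfolding Q block_values_def by (simp add: map_eq_conv)
  then show ?thesis using permutes_eq_if_agree_on_cover assms(1-4) Q by metis
qed

lemma card_block_ball_le:
  assumes "t < n"
  shows "card (block_ball n t) \<le> \<Prod>{n - t..n}"
proof -
  define cover where "cover \<sigma> = (SOME Q. covers_breakpoints n \<sigma> Q \<and> card Q = Suc t)" for \<sigma>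
  have perm: "\<sigma> permutes {1..n}" if "\<sigma> \<in> block_ball n t" for \<sigma>
    using that unfolding block_ball_def by auto
  have cover: "covers_breakpoints n \<sigma> (cover \<sigma>) \<and> card (cover \<sigma>) = Suc t"
    if "\<sigma> \<in> block_ball n t" for \<sigma>
  proof -
    have "card (breakpoints n \<sigma>) \<le> t"
      using that block_dist_id_eq_card_breakpoints[OF perm[OF that]]
      unfolding block_ball_def by simp
    then show ?thesis
      unfolding cover_def by (rule someI_ex[OF exists_covers_breakpoints[OF _ assms]])
  qed
  define enc where "enc \<sigma> = block_values \<sigma> (cover \<sigma>)" for \<sigma>
  define LS where "LS = {xs. length xs = Suc t \<and> distinct xs \<and> set xs \<subseteq> {1..n}}"
  have "inj_on enc (block_ball n t)"
  proof (rule inj_onI)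
    fix \<sigma> \<tau> assume "\<sigma> \<in> block_ball n t" "\<tau> \<in> block_ball n t" "enc \<sigma> = enc \<tau>"
    then show "\<sigma> = \<tau>"
      using block_values_inj[OF perm _ perm] cover unfolding enc_def by blast
  qed
  moreover have "enc ` block_ball n t \<subseteq> LS"
  proof safe
    fix \<sigma> assume \<sigma>: "\<sigma> \<in> block_ball n t"
    have Q: "cover \<sigma> \<subseteq> {1..n}" "card (cover \<sigma>) = Suc t"
      using cover[OF \<sigma>] unfolding covers_breakpoints_def by auto
    have "finite (cover \<sigma>)" using cover[OF \<sigma>] finite_covers_breakpoints by blast
    moreover have "inj_on \<sigma> (cover \<sigma>)" "\<sigma> ` {1..n} = {1..n}"
      using perm[OF \<sigma>] Q inj_on_subset by (auto simp: permutes_inj_on permutes_image)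
    ultimately show "enc \<sigma> \<in> LS"
      using Q unfolding LS_def enc_def block_values_def by (auto simp: distinct_map)
  qed
  moreover have "finite LS" unfolding LS_def
    by (rule finite_subset[OF _ finite_lists_length_eq[of "{1..n}" "Suc t"]]) auto
  ultimately have "card (block_ball n t) \<le> card LS" by (rule card_inj_on_le)
  also have "card LS = \<Prod>{n - t..n}"
    using card_lists_distinct_length_eq[of "{1..n}" "Suc t"] assms
    by (simp add: LS_def Suc_diff_Suc)
  finally show ?thesis .
qed

lemma card_block_ball_pos: "0 < card (block_ball n t)"
proof -
  have "id \<in> block_ball n t" unfolding block_ball_def block_dist_def by (simp add: permutes_id)
  moreover have "finite (block_ball n t)"
    by (rule finite_subset[OF _ finite_permutations[of "{1..n}"]]) (auto simp: block_ball_def)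
  ultimately show ?thesis by (auto simp: card_gt_0_iff)
qed

lemma of_nat_prod_atLeastAtMost_diff:
  assumes "t \<le> n"
  shows "real (\<Prod>{n - t..n}) = (\<Prod>i=0..t. (real n - real i))"
proof -
  have "\<Prod>{n - t..n} = (\<Prod>i=0..t. n - i)"
    by (rule prod.reindex_bij_witness[where i = "\<lambda>j. n - j" and j = "\<lambda>i. n - i"])
      (use assms in auto)
  then show ?thesis using assms by (simp add: of_nat_prod of_nat_diff)
qed

lemma A_new_eq:
  assumes "1 \<le> d" "d \<le> n - 1"
  shows "A_new n d = real n * fact n / (real d * fact d)"
proof -
  obtain e where e: "d = Suc e" using assms by (cases d) auto
  have "real (n choose d) = fact n / (fact d * fact (n - d))"
    using assms by (intro binomial_fact) simp
  moreover have "real d * real (n choose d) = real n * real ((n - 1) choose e)"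
    using arg_cong[OF binomial_absorption[of e n], of real] e by (simp add: algebra_simps)
  moreover have "(n - 1) choose (n - d) = (n - 1) choose e"
    using binomial_symmetric[of e "n - 1"] e assms by simp
  moreover have "(n - 1) choose e > 0" "real d > 0" using e assms by simp_all
  ultimately show ?thesis unfolding A_new_def by (simp add: field_simps)
qed

theorem mainTheorem8:
  fixes n t d :: nat
  assumes "n > 0" and "t > 0" and "d = 2 * t + 1"
    and "real t \<le> real n - sqrt (real n) - 1"
    and "real n * (\<Prod>i=0..t. (real n - real i)) \<le> real d * fact d"
    and "d \<le> n - 1"
  shows "A_new n d \<le> A_SP n t"
proof -
  have tn: "t < n" using assms(3,6) by simp
  define B where "B = card (block_ball n t)"
  have "B > 0" unfolding B_def by (rule card_block_ball_pos)
  have "real B \<le> (\<Prod>i=0..t. (real n - real i))"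
    using card_block_ball_le[OF tn] of_nat_prod_atLeastAtMost_diff[of t n] tn
    unfolding B_def by (metis less_imp_le of_nat_le_iff)
  then have "real n * real B \<le> real d * fact d"
    using assms(5) by (meson order_trans mult_left_mono of_nat_0_le_iff)
  then have "real n * fact n / (real d * fact d) \<le> fact n / real B"
    using \<open>B > 0\<close> \<open>d = 2 * t + 1\<close>
    by (simp add: divide_simps mult.commute mult.left_commute mult_left_mono)
  then show ?thesis using A_new_eq[of d n] assms(3,6) unfolding A_SP_def B_def by simp
qed

end
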